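(* Let $K\ge1$, $A=\{1,\dots,K\}$, let $d\ge1$ be an integer, $0<\delta\le 1/d$ and $0<\eta\le\frac{1}{Ke(d+1)}$. Consider the update: $w_1(i)=1$, $W_t=\sum_j w_t(j)$, $\widetilde p_t(i)=\max\{w_t(i)/W_t,\delta/K\}$, $\widetilde P_t=\sum_j\widetilde p_t(j)$, $p_t(i)=\widetilde p_t(i)/\widetilde P_t$, $w_{t+1}(i)=p_t(i)\exp(-\eta\widehat\ell_t(i))$, where $$\widehat\ell_t(i)=\begin{cases}\dfrac{\ell_{t-d}(i)}{q_{t-d}(i)}B_{t-d}(i)&t>d,\\0&\text{otherwise,}\end{cases}$$ with $\ell_s(i)\in[0,1]$, $B_s(i)\in\{0,1\}$ and $q_s(i)\ge p_s(i)$ for all $s,i$. Then for all $t\ge1$ and $i\in A$, $$p_{t+1}(i)\le\Bigl(1+\frac1d\Bigr)p_t(i).$$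
   Context: The statement holds deterministically for every realization of the $\ell_s,B_s,q_s$ satisfying the stated conditions. *)

theory Defs
  imports Complex_Main
begin

text \<open>Arms are A = {1..K}; rounds are indexed from 1.
  Losses l s i, indicators B s i and q s i are arbitrary real-valued sequences.\<close>

definition loss_est :: "nat \<Rightarrow> (nat \<Rightarrow> nat \<Rightarrow> real) \<Rightarrow> (nat \<Rightarrow> nat \<Rightarrow> real)
    \<Rightarrow> (nat \<Rightarrow> nat \<Rightarrow> real) \<Rightarrow> nat \<Rightarrow> nat \<Rightarrow> real" where
  "loss_est d l B q t i =
     (if t > d then l (t - d) i / q (t - d) i * B (t - d) i else 0)"

definition ptilde :: "nat \<Rightarrow> real \<Rightarrow> (nat \<Rightarrow> real) \<Rightarrow> nat \<Rightarrow> real" where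
  "ptilde K \<delta> w i = max (w i / (\<Sum>j\<in>{1..K}. w j)) (\<delta> / real K)"

definition pnorm :: "nat \<Rightarrow> real \<Rightarrow> (nat \<Rightarrow> real) \<Rightarrow> nat \<Rightarrow> real" where
  "pnorm K \<delta> w i = ptilde K \<delta> w i / (\<Sum>j\<in>{1..K}. ptilde K \<delta> w j)"

text \<open>wseq ... n is the weight vector w_{n+1}.\<close>
primrec wseq :: "nat \<Rightarrow> real \<Rightarrow> real \<Rightarrow> nat \<Rightarrow> (nat \<Rightarrow> nat \<Rightarrow> real)
    \<Rightarrow> (nat \<Rightarrow> nat \<Rightarrow> real) \<Rightarrow> (nat \<Rightarrow> nat \<Rightarrow> real) \<Rightarrow> nat \<Rightarrow> nat \<Rightarrow> real" where
  "wseq K \<delta> \<eta> d l B q 0 = (\<lambda>i. 1)"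
| "wseq K \<delta> \<eta> d l B q (Suc n) =
     (\<lambda>i. pnorm K \<delta> (wseq K \<delta> \<eta> d l B q n) i * exp (- \<eta> * loss_est d l B q (Suc n) i))"

definition wt :: "nat \<Rightarrow> real \<Rightarrow> real \<Rightarrow> nat \<Rightarrow> (nat \<Rightarrow> nat \<Rightarrow> real)
    \<Rightarrow> (nat \<Rightarrow> nat \<Rightarrow> real) \<Rightarrow> (nat \<Rightarrow> nat \<Rightarrow> real) \<Rightarrow> nat \<Rightarrow> nat \<Rightarrow> real" where
  "wt K \<delta> \<eta> d l B q t = wseq K \<delta> \<eta> d l B q (t - 1)"

definition prob :: "nat \<Rightarrow> real \<Rightarrow> real \<Rightarrow> nat \<Rightarrow> (nat \<Rightarrow> nat \<Rightarrow> real)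
    \<Rightarrow> (nat \<Rightarrow> nat \<Rightarrow> real) \<Rightarrow> (nat \<Rightarrow> nat \<Rightarrow> real) \<Rightarrow> nat \<Rightarrow> nat \<Rightarrow> real" where
  "prob K \<delta> \<eta> d l B q t i = pnorm K \<delta> (wt K \<delta> \<eta> d l B q t) i"

end

theory Submission
  imports Defs
begin

text \<open>All probabilities are positive and \<open>q \<ge> p\<close>, so the delayed estimate satisfies
  \<open>\<ell>\<^sub>t(i) \<le> 1/p\<^sub>t\<^sub>-\<^sub>d(i)\<close>. By strong induction on \<open>t\<close>, the claim for the previous \<open>d\<close> rounds gives
  \<open>p\<^sub>t(i) \<le> (1+1/d)\<^sup>d p\<^sub>t\<^sub>-\<^sub>d(i) \<le> e p\<^sub>t\<^sub>-\<^sub>d(i)\<close>, hence \<open>p\<^sub>t(i) \<ell>\<^sub>t(i) \<le> e\<close> for every arm. Then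
  \<open>W\<^sub>t\<^sub>+\<^sub>1 \<ge> 1 - \<eta> \<Sum> p\<^sub>t \<ell>\<^sub>t \<ge> 1 - \<eta> K e \<ge> d/(d+1)\<close> while \<open>w\<^sub>t\<^sub>+\<^sub>1(i) \<le> p\<^sub>t(i)\<close>, so
  \<open>w\<^sub>t\<^sub>+\<^sub>1(i)/W\<^sub>t\<^sub>+\<^sub>1 \<le> (1+1/d) p\<^sub>t(i)\<close>. The exploration floor obeys the same bound:
  \<open>\<Sum> ptilde\<^sub>t \<le> 1+\<delta>\<close> gives \<open>\<delta>/K \<le> (1+\<delta>) p\<^sub>t(i)\<close>, and \<open>\<delta> \<le> 1/d\<close>. Finally \<open>\<Sum> ptilde\<^sub>t\<^sub>+\<^sub>1 \<ge> 1\<close>, so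
  normalising only decreases \<open>ptilde\<^sub>t\<^sub>+\<^sub>1(i)\<close>.\<close>

lemma ptilde_ge: "\<delta> / real K \<le> ptilde K \<delta> w i"
  by (simp add: ptilde_def)

lemma ptilde_pos:
  assumes "K \<ge> 1" "\<delta> > 0"
  shows "ptilde K \<delta> w i > 0"
  using assms by (intro less_le_trans[OF _ ptilde_ge]) simp

lemma sum_ptilde_ge_delta:
  assumes "K \<ge> 1" "\<delta> > 0"
  shows "(\<Sum>j\<in>{1..K}. ptilde K \<delta> w j) \<ge> \<delta>"
proof -
  have "(\<Sum>j\<in>{1..K}. ptilde K \<delta> w j) \<ge> (\<Sum>j\<in>{1..K}. \<delta> / real K)"
    by (rule sum_mono) (simp add: ptilde_ge)
  then show ?thesis using assms by simp
qed

lemma sum_ptilde_ge_1: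
  assumes "K \<ge> 1" "\<forall>j\<in>{1..K}. w j > 0"
  shows "(\<Sum>j\<in>{1..K}. ptilde K \<delta> w j) \<ge> 1"
proof -
  have W: "(\<Sum>j\<in>{1..K}. w j) > 0" using assms by (intro sum_pos) auto
  have "(\<Sum>j\<in>{1..K}. ptilde K \<delta> w j) \<ge> (\<Sum>j\<in>{1..K}. w j / (\<Sum>j\<in>{1..K}. w j))"
    by (rule sum_mono) (simp add: ptilde_def)
  also have "(\<Sum>j\<in>{1..K}. w j / (\<Sum>j\<in>{1..K}. w j)) = 1"
    using W by (simp add: sum_divide_distrib[symmetric])
  finally show ?thesis .
qed

lemma sum_ptilde_le_1_plus_delta:
  assumes "K \<ge> 1" "\<delta> > 0" "\<forall>j\<in>{1..K}. w j > 0"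
  shows "(\<Sum>j\<in>{1..K}. ptilde K \<delta> w j) \<le> 1 + \<delta>"
proof -
  have W: "(\<Sum>j\<in>{1..K}. w j) > 0" using assms by (intro sum_pos) auto
  have "(\<Sum>j\<in>{1..K}. ptilde K \<delta> w j)
          \<le> (\<Sum>j\<in>{1..K}. w j / (\<Sum>j\<in>{1..K}. w j) + \<delta> / real K)"
  proof (rule sum_mono)
    fix j assume "j \<in> {1..K}"
    then have "w j / (\<Sum>j\<in>{1..K}. w j) \<ge> 0" using W assms by (simp add: less_imp_le)
    then show "ptilde K \<delta> w j \<le> w j / (\<Sum>j\<in>{1..K}. w j) + \<delta> / real K"
      using assms unfolding ptilde_def by simp
  qed
  also have "\<dots> = 1 + \<delta>"
    using W assms by (simp add: sum.distrib sum_divide_distrib[symmetric])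
  finally show ?thesis .
qed

lemma pnorm_pos:
  assumes "K \<ge> 1" "\<delta> > 0"
  shows "pnorm K \<delta> w i > 0"
  unfolding pnorm_def using ptilde_pos[OF assms] sum_ptilde_ge_delta[OF assms, of w] assms by simp

lemma sum_pnorm:
  assumes "K \<ge> 1" "\<delta> > 0"
  shows "(\<Sum>j\<in>{1..K}. pnorm K \<delta> w j) = 1"
  unfolding pnorm_def using sum_ptilde_ge_delta[OF assms, of w] assms
  by (simp add: sum_divide_distrib[symmetric])

lemma pnorm_le_ptilde:
  assumes "K \<ge> 1" "\<delta> > 0" "\<forall>j\<in>{1..K}. w j > 0"
  shows "pnorm K \<delta> w i \<le> ptilde K \<delta> w i"
proof -
  have "ptilde K \<delta> w i / (\<Sum>j\<in>{1..K}. ptilde K \<delta> w j) \<le> ptilde K \<delta> w i / 1"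
    using sum_ptilde_ge_1[OF assms(1,3), of \<delta>] ptilde_pos[OF assms(1,2), of w i]
    by (intro divide_left_mono) auto
  then show ?thesis unfolding pnorm_def by simp
qed

lemma pnorm_ge:
  assumes "K \<ge> 1" "\<delta> > 0" "\<forall>j\<in>{1..K}. w j > 0"
  shows "pnorm K \<delta> w i \<ge> \<delta> / real K / (1 + \<delta>)"
proof -
  have S: "1 \<le> (\<Sum>j\<in>{1..K}. ptilde K \<delta> w j)" "(\<Sum>j\<in>{1..K}. ptilde K \<delta> w j) \<le> 1 + \<delta>"
    using sum_ptilde_ge_1[OF assms(1,3)] sum_ptilde_le_1_plus_delta[OF assms] .
  have "\<delta> / real K / (1 + \<delta>) \<le> \<delta> / real K / (\<Sum>j\<in>{1..K}. ptilde K \<delta> w j)"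
    using S assms by (intro divide_left_mono) auto
  also have "\<dots> \<le> pnorm K \<delta> w i"
    unfolding pnorm_def using S by (intro divide_right_mono ptilde_ge) auto
  finally show ?thesis .
qed

lemma one_plus_inverse_power_le_exp_1:
  assumes "d \<ge> (1::nat)"
  shows "(1 + 1 / real d) ^ d \<le> exp 1"
proof -
  have "(1 + 1 / real d) ^ d \<le> exp (1 / real d) ^ d"
    by (intro power_mono exp_ge_add_one_self) auto
  also have "\<dots> = exp 1" using assms by (simp add: exp_of_nat_mult[symmetric])
  finally show ?thesis .
qed

lemma le_power_mult_of_step_le:
  fixes f :: "nat \<Rightarrow> real"
  assumes "c \<ge> 0" and "\<And>s. a \<le> s \<Longrightarrow> s < a + m \<Longrightarrow> f (Suc s) \<le> c * f s"
  shows "f (a + m) \<le> c ^ m * f a"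
  using assms(2)
proof (induction m)
  case (Suc m)
  then have "f (a + Suc m) \<le> c * f (a + m)" by simp
  also have "\<dots> \<le> c * (c ^ m * f a)" using Suc \<open>c \<ge> 0\<close> by (intro mult_left_mono) auto
  finally show ?case by (simp add: algebra_simps)
qed simp

lemma sum_exp_weights_ge:
  fixes p L :: "'a \<Rightarrow> real"
  assumes "sum p A = 1" "\<forall>j\<in>A. p j \<ge> 0"
  shows "(\<Sum>j\<in>A. p j * exp (- \<eta> * L j)) \<ge> 1 - \<eta> * (\<Sum>j\<in>A. p j * L j)"
proof -
  have "p j * (1 - \<eta> * L j) \<le> p j * exp (- \<eta> * L j)" if "j \<in> A" for j
    using assms(2) that exp_ge_add_one_self[of "- \<eta> * L j"] by (intro mult_left_mono) auto
  then have "(\<Sum>j\<in>A. p j * exp (- \<eta> * L j)) \<ge> (\<Sum>j\<in>A. p j * (1 - \<eta> * L j))"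
    by (rule sum_mono)
  also have "(\<Sum>j\<in>A. p j * (1 - \<eta> * L j)) = 1 - \<eta> * (\<Sum>j\<in>A. p j * L j)"
    using assms(1) by (simp add: algebra_simps sum_subtractf sum_distrib_left)
  finally show ?thesis .
qed

locale delayed_exp3 =
  fixes K d :: nat and \<delta> \<eta> :: real and l B q :: "nat \<Rightarrow> nat \<Rightarrow> real"
  assumes K: "K \<ge> 1" and d: "d \<ge> 1"
    and \<delta>_pos: "0 < \<delta>" and \<delta>_le: "\<delta> \<le> 1 / real d"
    and \<eta>_pos: "0 < \<eta>" and \<eta>_le: "\<eta> \<le> 1 / (real K * exp 1 * (real d + 1))"
    and loss: "\<And>s i. s \<ge> 1 \<Longrightarrow> i \<in> {1..K} \<Longrightarrow> 0 \<le> l s i \<and> l s i \<le> 1"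
    and indicator: "\<And>s i. s \<ge> 1 \<Longrightarrow> i \<in> {1..K} \<Longrightarrow> B s i \<in> {0, 1}"
    and q_ge: "\<And>s i. s \<ge> 1 \<Longrightarrow> i \<in> {1..K} \<Longrightarrow> q s i \<ge> prob K \<delta> \<eta> d l B q s i"
begin

abbreviation "p \<equiv> prob K \<delta> \<eta> d l B q"
abbreviation "w \<equiv> wseq K \<delta> \<eta> d l B q"
abbreviation "L \<equiv> loss_est d l B q"

lemma prob_Suc: "p (Suc n) = pnorm K \<delta> (w n)"
  by (simp add: prob_def wt_def fun_eq_iff)

lemma wseq_eq:
  assumes "t \<ge> 1"
  shows "w t i = p t i * exp (- \<eta> * L t i)"
proof -
  obtain n where "t = Suc n" using assms by (cases t) auto
  then show ?thesis by (simp add: prob_Suc)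
qed

lemma prob_pos: "p t i > 0"
  unfolding prob_def using pnorm_pos[OF K \<delta>_pos] .

lemma sum_prob: "(\<Sum>j\<in>{1..K}. p t j) = 1"
  unfolding prob_def using sum_pnorm[OF K \<delta>_pos] .

lemma wseq_pos: "w n i > 0"
  by (cases n) (simp_all add: pnorm_pos[OF K \<delta>_pos])

lemma prob_ge: "p t i \<ge> \<delta> / real K / (1 + \<delta>)"
  unfolding prob_def using pnorm_ge[OF K \<delta>_pos] wseq_pos by (simp add: wt_def)

lemma loss_est_nonneg:
  assumes "j \<in> {1..K}"
  shows "L t j \<ge> 0"
proof (cases "t > d")
  case True
  then have s: "t - d \<ge> 1" by simp
  have "q (t - d) j > 0" using q_ge[OF s assms] prob_pos[of "t - d" j] by linarith
  moreover have "l (t - d) j \<ge> 0" "B (t - d) j \<ge> 0"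
    using loss[OF s assms] indicator[OF s assms] by auto
  ultimately show ?thesis using True by (simp add: loss_est_def)
qed (simp add: loss_est_def)

lemma loss_est_le_inverse_prob:
  assumes "t > d" "j \<in> {1..K}"
  shows "L t j \<le> 1 / p (t - d) j"
proof -
  have s: "t - d \<ge> 1" using assms by simp
  have q: "q (t - d) j \<ge> p (t - d) j" using q_ge[OF s assms(2)] .
  have lb: "0 \<le> l (t - d) j * B (t - d) j" "l (t - d) j * B (t - d) j \<le> 1"
    using loss[OF s assms(2)] indicator[OF s assms(2)] by auto
  have "L t j = l (t - d) j * B (t - d) j / q (t - d) j"
    using assms by (simp add: loss_est_def)
  also have "\<dots> \<le> 1 / q (t - d) j"
    using lb q prob_pos[of "t - d" j] by (intro divide_right_mono) auto
  also have "\<dots> \<le> 1 / p (t - d) j"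
    using q prob_pos[of "t - d" j] by (intro divide_left_mono) auto
  finally show ?thesis .
qed

lemma prob_mul_loss_est_le_exp_1:
  assumes "j \<in> {1..K}"
    and growth: "\<And>s. 1 \<le> s \<Longrightarrow> s < t \<Longrightarrow> p (Suc s) j \<le> (1 + 1 / real d) * p s j"
  shows "p t j * L t j \<le> exp 1"
proof (cases "t > d")
  case True
  have "p (t - d + d) j \<le> (1 + 1 / real d) ^ d * p (t - d) j"
  proof (rule le_power_mult_of_step_le)
    fix s assume "t - d \<le> s" "s < t - d + d"
    then show "p (Suc s) j \<le> (1 + 1 / real d) * p s j" using True by (intro growth) auto
  qed simp
  then have chain: "p t j \<le> (1 + 1 / real d) ^ d * p (t - d) j" using True by simp
  have "p t j * L t j \<le> p t j * (1 / p (t - d) j)"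
    using loss_est_le_inverse_prob[OF True assms(1)] prob_pos[of t j] by (intro mult_left_mono) auto
  also have "\<dots> \<le> (1 + 1 / real d) ^ d * p (t - d) j * (1 / p (t - d) j)"
    using chain prob_pos[of "t - d" j] by (intro mult_right_mono) auto
  also have "\<dots> = (1 + 1 / real d) ^ d" using prob_pos[of "t - d" j] by simp
  also have "\<dots> \<le> exp 1" using one_plus_inverse_power_le_exp_1[OF d] .
  finally show ?thesis .
qed (simp add: loss_est_def)

lemma sum_wseq_ge:
  assumes "t \<ge> 1" and pL: "\<And>j. j \<in> {1..K} \<Longrightarrow> p t j * L t j \<le> exp 1"
  shows "(\<Sum>j\<in>{1..K}. w t j) \<ge> real d / (real d + 1)"
proof -
  have "(\<Sum>j\<in>{1..K}. w t j) \<ge> 1 - \<eta> * (\<Sum>j\<in>{1..K}. p t j * L t j)"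
    using sum_exp_weights_ge[OF sum_prob] prob_pos by (simp add: wseq_eq[OF assms(1)] less_imp_le)
  moreover have "(\<Sum>j\<in>{1..K}. p t j * L t j) \<le> real K * exp 1"
    using sum_mono[of "{1..K}", OF pL] by simp
  then have "\<eta> * (\<Sum>j\<in>{1..K}. p t j * L t j) \<le> \<eta> * (real K * exp 1)"
    using \<eta>_pos by (intro mult_left_mono) auto
  moreover have "\<eta> * (real K * exp 1) \<le> 1 / (real K * exp 1 * (real d + 1)) * (real K * exp 1)"
    using \<eta>_le K by (intro mult_right_mono) auto
  moreover have "1 / (real K * exp 1 * (real d + 1)) * (real K * exp 1) = 1 - real d / (real d + 1)"
  proof -
    have "real K * exp 1 > 0" using K by simp
    then have "1 / (real K * exp 1 * (real d + 1)) * (real K * exp 1) = 1 / (real d + 1)" using K by simp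
    also have "\<dots> = 1 - real d / (real d + 1)" by (simp add: field_simps)
    finally show ?thesis .
  qed
  ultimately show ?thesis by linarith
qed

lemma prob_Suc_le_of_loss_bound:
  assumes "t \<ge> 1" "i \<in> {1..K}" and pL: "\<And>j. j \<in> {1..K} \<Longrightarrow> p t j * L t j \<le> exp 1"
  shows "p (Suc t) i \<le> (1 + 1 / real d) * p t i"
proof -
  have W: "(\<Sum>j\<in>{1..K}. w t j) \<ge> real d / (real d + 1)" using sum_wseq_ge[OF assms(1) pL] .
  have "w t i \<le> p t i"
    using wseq_eq[OF assms(1)] loss_est_nonneg[OF assms(2)] prob_pos[of t i] \<eta>_pos
    by (simp add: mult_le_cancel_left1)
  then have "w t i / (\<Sum>j\<in>{1..K}. w t j) \<le> p t i / (real d / (real d + 1))"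
    using W d wseq_pos[of t i] by (intro frac_le) auto
  also have "\<dots> = (1 + 1 / real d) * p t i" using d by (simp add: field_simps)
  finally have weight: "w t i / (\<Sum>j\<in>{1..K}. w t j) \<le> (1 + 1 / real d) * p t i" .
  have "\<delta> / real K = (1 + \<delta>) * (\<delta> / real K / (1 + \<delta>))" using \<delta>_pos by simp
  also have "\<dots> \<le> (1 + 1 / real d) * p t i"
    using \<delta>_le \<delta>_pos K prob_ge[of t i] by (intro mult_mono) auto
  finally have floor: "\<delta> / real K \<le> (1 + 1 / real d) * p t i" .
  have "p (Suc t) i \<le> ptilde K \<delta> (w t) i"
    unfolding prob_Suc using pnorm_le_ptilde[OF K \<delta>_pos] wseq_pos by simp
  with weight floor show ?thesis unfolding ptilde_def by linarith
qed

lemma prob_Suc_le: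
  assumes "t \<ge> 1" "i \<in> {1..K}"
  shows "p (Suc t) i \<le> (1 + 1 / real d) * p t i"
  using assms
proof (induction t arbitrary: i rule: less_induct)
  case (less t)
  have "p t j * L t j \<le> exp 1" if "j \<in> {1..K}" for j
    using that less.IH by (intro prob_mul_loss_est_le_exp_1) auto
  then show ?case using prob_Suc_le_of_loss_bound less.prems by blast
qed

end

theorem mainTheorem6:
  fixes K d :: nat and \<delta> \<eta> :: real and l B q :: "nat \<Rightarrow> nat \<Rightarrow> real"
  assumes "K \<ge> 1" and "d \<ge> 1"
    and "0 < \<delta>" and "\<delta> \<le> 1 / real d"
    and "0 < \<eta>" and "\<eta> \<le> 1 / (real K * exp 1 * (real d + 1))"
    and "\<And>s i. s \<ge> 1 \<Longrightarrow> i \<in> {1..K} \<Longrightarrow> 0 \<le> l s i \<and> l s i \<le> 1"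
    and "\<And>s i. s \<ge> 1 \<Longrightarrow> i \<in> {1..K} \<Longrightarrow> B s i \<in> {0, 1}"
    and "\<And>s i. s \<ge> 1 \<Longrightarrow> i \<in> {1..K} \<Longrightarrow> q s i \<ge> prob K \<delta> \<eta> d l B q s i"
  shows "\<forall>t\<ge>1. \<forall>i\<in>{1..K}.
           prob K \<delta> \<eta> d l B q (t + 1) i \<le> (1 + 1 / real d) * prob K \<delta> \<eta> d l B q t i"
proof -
  interpret delayed_exp3 K d \<delta> \<eta> l B q
    using assms by unfold_locales
  show ?thesis using prob_Suc_le by simp
qed

end
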